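(* In the setting and notation of the context, for all $\phi\in C(\mathbb{T}^d\times\{1,\dots,d\})$, all $t\in[0,T]$ and all $n\in\mathbb{N}$, $$\mathbb E\langle\phi,\Lambda^{(n)}(t)\rangle_{x,l}\le d\,\lVert\phi\rVert_C\,\lVert\rho_0\rVert_C^2.$$
   Context: Fix $d\in\mathbb{N}$, $T>0$. Let $\mathbb{T}^d=\mathbb{R}^d/\mathbb{Z}^d$. For each $n\in\mathbb{N}$ let $\epsilon=\epsilon_n$ with $1/\epsilon\in\mathbb{N}$, $\mathbb{T}_\epsilon^d=(\epsilon\mathbb{Z}/\mathbb{Z})^d$, $\mathds1_l$ the $l$-th unit vector; $x\sim y$ means $y=x\pm\epsilon\mathds1_l$ for some $l$ and sign. $\eta(t)\in\{0,1\}^{\mathbb{T}_\epsilon^d}$ is the symmetric exclusion process: for each ordered pair $(x,y)$ with $x\sim y$, at rate $\epsilon^{-2}\eta(x)(1-\eta(y))$ the particle at $x$ jumps to $y$. Initial condition: $\rho_0\in C(\mathbb{T}^d)$ nonnegative; the $\eta(x,0)$ are independent Bernoulli with parameter $n\int_{B_\epsilon(x)}\rho_0\le1$, $B_\epsilon(x)=\prod_i[x_i-\epsilon/2,x_i+\epsilon/2]$. Nearest-neighbour measure on $\mathbb{T}^d\times\{1,\dots,d\}$: $\Lambda^{(n)}(t)=\frac1{\epsilon^dn^2}\sum_{l=1}^d\sum_{x}\eta(x,t)\eta(x+\epsilon\mathds1_l,t)\,\delta_{(x+\frac\epsilon2\mathds1_l,\,l)}$, and $\langle\phi,\mu\rangle_{x,l}=\sum_l\int\phi_l\,d\mu_l$.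 $\lVert\cdot\rVert_C$ is the supremum norm. *)

theory Defs
  imports "HOL-Analysis.Analysis"
begin

text \<open>Discrete torus (eps Z/Z)^d with 1/eps = N: a site is x :: 'd => nat with x i < N,
  representing the point eps*x. The dimension is d = CARD('d).\<close>

definition sites :: "nat \<Rightarrow> ('d::finite \<Rightarrow> nat) set" where
  "sites N = {x. \<forall>i. x i < N}"

text \<open>Configurations eta in {0,1}^sites (True = occupied).\<close>
definition configs :: "nat \<Rightarrow> (('d::finite \<Rightarrow> nat) \<Rightarrow> bool) set" where
  "configs N = sites N \<rightarrow>\<^sub>E (UNIV :: bool set)"

definition nbrs :: "nat \<Rightarrow> ('d::finite \<Rightarrow> nat) \<Rightarrow> ('d \<Rightarrow> nat) set" where
  "nbrs N x = (\<lambda>(l, s). x(l := (x l + s) mod N)) ` (UNIV \<times> {1, N - 1})"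

definition gen :: "nat \<Rightarrow> ((('d::finite \<Rightarrow> nat) \<Rightarrow> bool) \<Rightarrow> real)
    \<Rightarrow> (('d \<Rightarrow> nat) \<Rightarrow> bool) \<Rightarrow> real" where
  "gen N f \<eta> = (\<Sum>x\<in>sites N. \<Sum>y\<in>nbrs N x.
      real N ^ 2 * (if \<eta> x \<and> \<not> \<eta> y then f (\<eta>(x := False, y := True)) - f \<eta> else 0))"

text \<open>Transition semigroup P_t = exp(t L) of the (finite state) Markov chain:
  (P_t f)(eta) = E_eta f(eta(t)).\<close>
definition semigroup :: "nat \<Rightarrow> real \<Rightarrow> ((('d::finite \<Rightarrow> nat) \<Rightarrow> bool) \<Rightarrow> real)
    \<Rightarrow> (('d \<Rightarrow> nat) \<Rightarrow> bool) \<Rightarrow> real" where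
  "semigroup N t f \<eta> = (\<Sum>k. t ^ k / fact k * (gen N ^^ k) f \<eta>)"

definition cell_center :: "nat \<Rightarrow> ('d::finite \<Rightarrow> nat) \<Rightarrow> real ^ 'd" where
  "cell_center N x = (\<chi> i. real (x i) / real N)"

definition cell :: "nat \<Rightarrow> ('d::finite \<Rightarrow> nat) \<Rightarrow> (real ^ 'd) set" where
  "cell N x = cbox (cell_center N x - (\<chi> i. 1 / (2 * real N)))
                   (cell_center N x + (\<chi> i. 1 / (2 * real N)))"

definition init_prob :: "nat \<Rightarrow> nat \<Rightarrow> (real ^ 'd \<Rightarrow> real) \<Rightarrow> ('d::finite \<Rightarrow> nat) \<Rightarrow> real" where
  "init_prob n N \<rho>0 x = real n * integral (cell N x) \<rho>0"

definition init_dist :: "nat \<Rightarrow> nat \<Rightarrow> (real ^ 'd \<Rightarrow> real) \<Rightarrow> (('d::finite \<Rightarrow> nat) \<Rightarrow> bool) \<Rightarrow> real" where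
  "init_dist n N \<rho>0 \<eta> = (\<Prod>x\<in>sites N. if \<eta> x then init_prob n N \<rho>0 x else 1 - init_prob n N \<rho>0 x)"

definition pair_functional :: "nat \<Rightarrow> nat \<Rightarrow> ('d \<Rightarrow> real ^ 'd \<Rightarrow> real)
    \<Rightarrow> (('d::finite \<Rightarrow> nat) \<Rightarrow> bool) \<Rightarrow> real" where
  "pair_functional n N \<phi> \<eta> = real N ^ CARD('d) / real n ^ 2 *
     (\<Sum>l\<in>UNIV. \<Sum>x\<in>sites N.
        (if \<eta> x \<and> \<eta> (x(l := (x l + 1) mod N)) then 1 else 0)
        * \<phi> l (cell_center N x + (1 / (2 * real N)) *\<^sub>R axis l 1))"

definition expected_pairing :: "nat \<Rightarrow> nat \<Rightarrow> (real ^ 'd \<Rightarrow> real) \<Rightarrow> ('d::finite \<Rightarrow> real ^ 'd \<Rightarrow> real)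
    \<Rightarrow> real \<Rightarrow> real" where
  "expected_pairing n N \<rho>0 \<phi> t =
     (\<Sum>\<eta>0\<in>configs N. init_dist n N \<rho>0 \<eta>0 * semigroup N t (pair_functional n N \<phi>) \<eta>0)"

text \<open>Continuous functions on the torus T^d = R^d/Z^d: continuous and Z^d-periodic.\<close>
definition torus_continuous :: "(real ^ 'd::finite \<Rightarrow> real) \<Rightarrow> bool" where
  "torus_continuous f \<longleftrightarrow> continuous_on UNIV f \<and> (\<forall>i y. f (y + axis i 1) = f y)"

definition sup_norm :: "(real ^ 'd::finite \<Rightarrow> real) \<Rightarrow> real" where
  "sup_norm f = Sup (range (\<lambda>y. \<bar>f y\<bar>))"

definition sup_norm2 :: "('d::finite \<Rightarrow> real ^ 'd \<Rightarrow> real) \<Rightarrow> real" where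
  "sup_norm2 \<phi> = Sup (range (\<lambda>(l, y). \<bar>\<phi> l y\<bar>))"

end

theory Submission
  imports Defs
begin

text \<open>
  Duality: applied to the pair indicator \<open>\<eta>(a) \<eta>(b)\<close>, the exclusion generator acts as the
  generator \<open>K\<close> of two exclusion particles on ordered pairs \<open>(a, b)\<close> of distinct sites.  Hence
  \<open>E \<langle>\<phi>, \<Lambda>(t)\<rangle>\<close> is a \<open>\<phi>\<close>-weighted sum over bonds of \<open>exp(t K)\<close> applied to the initial
  two-point function \<open>\<rho>(a) \<rho>(b)\<close> of the product Bernoulli law.  For \<open>c = 4 d N\<^sup>2\<close> the operator
  \<open>K + c\<close> is positive with norm at most \<open>c\<close>, so \<open>exp(t K) = exp(-c t) exp(t (K + c))\<close> maps
  functions with values in \<open>[0, B]\<close> to functions with values in \<open>[0, B]\<close>.  Since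
  \<open>\<rho>(a) \<le> n \<parallel>\<rho>\<^sub>0\<parallel> N\<^sup>-\<^sup>d\<close> and the bond weights are at most \<open>N\<^sup>d \<parallel>\<phi>\<parallel> / n\<^sup>2\<close>,
  summing over the \<open>d N\<^sup>d\<close> bonds gives the bound.
\<close>

section \<open>Linear operators and exponential series\<close>

text \<open>Function spaces \<open>'a \<Rightarrow> real\<close> carry no \<open>real_vector\<close> instance, so linearity is stated directly.\<close>

definition fun_linear :: "(('a \<Rightarrow> real) \<Rightarrow> 'b \<Rightarrow> real) \<Rightarrow> bool" where
  "fun_linear T \<longleftrightarrow> (\<forall>f g. T (\<lambda>q. f q + g q) = (\<lambda>p. T f p + T g p))
     \<and> (\<forall>c f. T (\<lambda>q. c * f q) = (\<lambda>p. c * T f p))"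

lemma fun_linear_add: "fun_linear T \<Longrightarrow> T (\<lambda>q. f q + g q) = (\<lambda>p. T f p + T g p)"
  unfolding fun_linear_def by blast

lemma fun_linear_scale: "fun_linear T \<Longrightarrow> T (\<lambda>q. c * f q) = (\<lambda>p. c * T f p)"
  unfolding fun_linear_def by blast

lemma fun_linear_zero: "fun_linear T \<Longrightarrow> T (\<lambda>q. 0) = (\<lambda>p. 0)"
  using fun_linear_scale[of T 0 "\<lambda>q. 0"] by simp

lemma fun_linear_diff: "fun_linear T \<Longrightarrow> T (\<lambda>q. f q - g q) = (\<lambda>p. T f p - T g p)"
  using fun_linear_add[of T f "\<lambda>q. (-1) * g q"] fun_linear_scale[of T "-1" g] by simp

lemma fun_linear_sum:
  assumes "fun_linear T" "finite I"
  shows "T (\<lambda>q. \<Sum>i\<in>I. f i q) = (\<lambda>p. \<Sum>i\<in>I. T (f i) p)"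
  using assms(2)
  by induction (simp_all add: fun_linear_zero[OF assms(1)] fun_linear_add[OF assms(1)])

lemma fun_linear_funpow:
  fixes T :: "('a \<Rightarrow> real) \<Rightarrow> 'a \<Rightarrow> real"
  assumes "fun_linear T"
  shows "fun_linear (T ^^ k)"
proof (induction k)
  case (Suc k)
  show ?case
    unfolding fun_linear_def
    by (simp add: fun_linear_add[OF Suc.IH] fun_linear_scale[OF Suc.IH]
        fun_linear_add[OF assms] fun_linear_scale[OF assms])
qed (simp add: fun_linear_def)

lemma binomial_shift_step:
  fixes u :: "nat \<Rightarrow> real"
  shows "(\<Sum>k\<le>n. of_nat (n choose k) * (-c)^k * u (Suc (n - k)))
       - c * (\<Sum>k\<le>n. of_nat (n choose k) * (-c)^k * u (n - k))
     = (\<Sum>k\<le>Suc n. of_nat (Suc n choose k) * (-c)^k * u (Suc n - k))"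
proof -
  have "(\<Sum>k\<le>n. of_nat (n choose k) * (-c)^k * u (Suc (n - k)))
      = (\<Sum>k\<le>Suc n. of_nat (n choose k) * (-c)^k * u (Suc n - k))"
    by (simp add: Suc_diff_le)
  also have "\<dots> = u (Suc n) + (\<Sum>k\<le>n. of_nat (n choose Suc k) * (-c)^Suc k * u (n - k))"
    by (subst sum.atMost_Suc_shift) simp
  finally show ?thesis
    by (subst sum.atMost_Suc_shift)
      (simp add: sum.distrib sum_distrib_left sum_subtractf sum_negf algebra_simps)
qed

lemma funpow_shift_binomial:
  fixes Q :: "('a \<Rightarrow> real) \<Rightarrow> 'a \<Rightarrow> real"
  assumes "fun_linear Q"
  shows "((\<lambda>h p. Q h p - c * h p) ^^ n) g
       = (\<lambda>p. \<Sum>k\<le>n. of_nat (n choose k) * (-c)^k * (Q ^^ (n - k)) g p)"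
proof (induction n)
  case (Suc n)
  have "((\<lambda>h p. Q h p - c * h p) ^^ Suc n) g
      = (\<lambda>p. (\<Sum>k\<le>n. of_nat (n choose k) * (-c)^k * (Q ^^ Suc (n - k)) g p)
             - c * (\<Sum>k\<le>n. of_nat (n choose k) * (-c)^k * (Q ^^ (n - k)) g p))"
    by (simp add: Suc.IH fun_linear_sum[OF assms] fun_linear_scale[OF assms] mult.assoc)
  then show ?case
    using binomial_shift_step[of n c "\<lambda>j. (Q ^^ j) g _"] by simp
qed simp

lemma exp_real_sums: "(\<lambda>n. x^n / fact n) sums exp (x::real)"
  using exp_converges[of x] by (simp add: divide_inverse mult.commute)

lemma exp_series_shift:
  fixes Q :: "('a \<Rightarrow> real) \<Rightarrow> 'a \<Rightarrow> real"
  assumes lin: "fun_linear Q"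
    and summable: "summable (\<lambda>j. norm (t^j / fact j * (Q ^^ j) g p))"
  shows "(\<lambda>n. t^n / fact n * ((\<lambda>h p. Q h p - c * h p) ^^ n) g p)
           sums (exp (-c*t) * (\<Sum>j. t^j / fact j * (Q ^^ j) g p))"
proof -
  define a where "a i = (-c*t)^i / fact i" for i
  define b where "b j = t^j / fact j * (Q ^^ j) g p" for j
  have "summable (\<lambda>k. \<bar>-c*t\<bar>^k / fact k)"
    using exp_real_sums sums_summable by blast
  then have "summable (\<lambda>k. norm (a k))"
    by (simp add: a_def abs_mult power_abs)
  from Cauchy_product_sums[OF this summable[folded b_def]]
  have "(\<lambda>k. \<Sum>i\<le>k. a i * b (k - i)) sums (exp (-c*t) * suminf b)"
    using exp_real_sums[of "-c*t"] unfolding a_def by (simp add: sums_iff)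
  moreover have "(\<Sum>i\<le>n. a i * b (n - i)) = t^n / fact n * ((\<lambda>h p. Q h p - c * h p) ^^ n) g p"
    for n
  proof -
    have "a i * b (n - i) = t^n / fact n * (of_nat (n choose i) * (-c)^i * (Q ^^ (n - i)) g p)"
      if "i \<le> n" for i
    proof -
      have "t^n = t^i * t^(n-i)" "(-c*t)^i = (-c)^i * t^i"
        using that by (simp_all flip: power_add power_mult_distrib)
      then show ?thesis
        unfolding a_def b_def binomial_fact[OF that] by (simp add: field_simps)
    qed
    then show ?thesis
      by (simp add: funpow_shift_binomial[OF lin] sum_distrib_left)
  qed
  ultimately show ?thesis
    unfolding b_def by simp
qed

lemma funpow_nonneg_bounded:
  fixes Q :: "('a \<Rightarrow> real) \<Rightarrow> 'a \<Rightarrow> real"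
  assumes Q: "\<And>h B. \<forall>q\<in>P. 0 \<le> h q \<and> h q \<le> B \<Longrightarrow> \<forall>q\<in>P. 0 \<le> Q h q \<and> Q h q \<le> c * B"
    and g: "\<forall>q\<in>P. 0 \<le> g q \<and> g q \<le> B"
  shows "\<forall>q\<in>P. 0 \<le> (Q ^^ j) g q \<and> (Q ^^ j) g q \<le> c ^ j * B"
proof (induction j)
  case (Suc j)
  then show ?case
    using Q[of "(Q ^^ j) g" "c ^ j * B"] by (simp add: mult.assoc)
qed (use g in simp)

lemma exp_series_nonneg_le:
  fixes Q :: "('a \<Rightarrow> real) \<Rightarrow> 'a \<Rightarrow> real"
  assumes Q: "\<And>h B. \<forall>q\<in>P. 0 \<le> h q \<and> h q \<le> B \<Longrightarrow> \<forall>q\<in>P. 0 \<le> Q h q \<and> Q h q \<le> c * B"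
    and "0 \<le> t" "p \<in> P" and g: "\<forall>q\<in>P. 0 \<le> g q \<and> g q \<le> B"
  shows "summable (\<lambda>j. norm (t^j / fact j * (Q ^^ j) g p))"
    and "0 \<le> (\<Sum>j. t^j / fact j * (Q ^^ j) g p)"
    and "(\<Sum>j. t^j / fact j * (Q ^^ j) g p) \<le> exp (c*t) * B"
proof -
  define f where "f j = t^j / fact j * (Q ^^ j) g p" for j
  have f: "0 \<le> f j \<and> f j \<le> (c*t)^j / fact j * B" for j
  proof -
    have "0 \<le> (Q ^^ j) g p \<and> (Q ^^ j) g p \<le> c ^ j * B"
      using funpow_nonneg_bounded[of P Q c g B j, OF Q g] \<open>p \<in> P\<close> by blast
    moreover have "0 \<le> t^j / fact j"
      using \<open>0 \<le> t\<close> by simp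
    ultimately have "0 \<le> f j" "f j \<le> t^j / fact j * (c ^ j * B)"
      unfolding f_def by (simp_all add: mult_left_mono del: times_divide_eq_left)
    then show ?thesis
      by (simp add: field_simps)
  qed
  have exp_sums: "(\<lambda>j. (c*t)^j / fact j * B) sums (exp (c*t) * B)"
    using exp_real_sums sums_mult2 by blast
  have "summable f"
    by (rule summable_comparison_test[OF _ sums_summable[OF exp_sums]]) (use f in auto)
  moreover have "(\<lambda>j. norm (f j)) = f"
    using f by (simp add: fun_eq_iff)
  ultimately show "summable (\<lambda>j. norm (t^j / fact j * (Q ^^ j) g p))"
    by (simp only: f_def)
  show "0 \<le> (\<Sum>j. t^j / fact j * (Q ^^ j) g p)"
    using suminf_nonneg[OF \<open>summable f\<close>] f unfolding f_def by blast
  show "(\<Sum>j. t^j / fact j * (Q ^^ j) g p) \<le> exp (c*t) * B"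
    using suminf_le[OF _ \<open>summable f\<close> sums_summable[OF exp_sums]] f sums_unique[OF exp_sums]
    unfolding f_def by simp
qed

lemma exp_series_nonneg_bounded:
  fixes K :: "('a \<Rightarrow> real) \<Rightarrow> 'a \<Rightarrow> real"
  assumes lin: "fun_linear K" and "0 \<le> t"
    and shifted: "\<And>h B. \<forall>q\<in>P. 0 \<le> h q \<and> h q \<le> B
      \<Longrightarrow> \<forall>q\<in>P. 0 \<le> K h q + c * h q \<and> K h q + c * h q \<le> c * B"
    and "p \<in> P" and "\<forall>q\<in>P. 0 \<le> g q \<and> g q \<le> B"
  obtains s where "(\<lambda>k. t^k / fact k * (K ^^ k) g p) sums s" "0 \<le> s" "s \<le> B"
proof -
  define Q where "Q h q = K h q + c * h q" for h q
  have K: "K = (\<lambda>h q. Q h q - c * h q)"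
    by (simp add: Q_def)
  have "fun_linear Q"
    using lin unfolding fun_linear_def Q_def by (simp add: fun_eq_iff algebra_simps)
  note Q_series = exp_series_nonneg_le[of P Q c, OF shifted[folded Q_def] assms(2,4,5)]
  show ?thesis
  proof
    show "(\<lambda>k. t^k / fact k * (K ^^ k) g p) sums (exp (-c*t) * (\<Sum>j. t^j / fact j * (Q ^^ j) g p))"
      unfolding K by (rule exp_series_shift[OF \<open>fun_linear Q\<close> Q_series(1)])
    show "0 \<le> exp (-c*t) * (\<Sum>j. t^j / fact j * (Q ^^ j) g p)"
      using Q_series(2) by simp
    have "exp (-c*t) * (\<Sum>j. t^j / fact j * (Q ^^ j) g p) \<le> exp (-c*t) * (exp (c*t) * B)"
      using Q_series(3) by simp
    then show "exp (-c*t) * (\<Sum>j. t^j / fact j * (Q ^^ j) g p) \<le> B"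
      by (simp add: exp_minus field_simps)
  qed
qed

section \<open>The discrete torus\<close>

lemma sites_eq_PiE: "sites N = (PiE UNIV (\<lambda>_. {..<N}) :: ('d::finite \<Rightarrow> nat) set)"
  by (auto simp: sites_def PiE_def Pi_def extensional_def)

lemma finite_sites: "finite (sites N :: ('d::finite \<Rightarrow> nat) set)"
  by (simp add: sites_eq_PiE finite_PiE)

lemma card_sites: "card (sites N :: ('d::finite \<Rightarrow> nat) set) = N ^ CARD('d)"
  by (simp add: sites_eq_PiE card_PiE)

lemma finite_nbrs: "finite (nbrs N x)"
  unfolding nbrs_def by simp

lemma card_nbrs_le: "card (nbrs N (x :: 'd::finite \<Rightarrow> nat)) \<le> 2 * CARD('d)"
proof -
  have "card (nbrs N x) \<le> card ((UNIV :: 'd set) \<times> {1, N - 1})"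
    unfolding nbrs_def by (rule card_image_le) simp
  also have "\<dots> \<le> 2 * CARD('d)"
    by (simp add: card_cartesian_product card_insert_le_m1)
  finally show ?thesis .
qed

lemma nbrs_subset_sites: "0 < N \<Longrightarrow> x \<in> sites N \<Longrightarrow> nbrs N x \<subseteq> sites N"
  unfolding nbrs_def sites_def by auto

lemma self_notin_nbrs:
  assumes "2 \<le> N"
  shows "x \<notin> nbrs N x"
proof
  assume "x \<in> nbrs N x"
  then obtain l s where s: "s \<in> {1, N - 1}" and "x = x(l := (x l + s) mod N)"
    unfolding nbrs_def by auto
  then have "(x l + s) mod N = x l"
    by (metis fun_upd_same)
  then have "(x l + s) mod N = x l mod N"
    by (metis mod_mod_trivial)
  then have "N dvd s"
    using mod_eq_dvd_iff_nat[of "x l" "x l + s" N] by simp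
  moreover have "0 < s" "s < N"
    using s assms by auto
  ultimately show False
    using dvd_imp_le by fastforce
qed

lemma nbrs_sym:
  assumes "2 \<le> N" "x \<in> sites N" "y \<in> nbrs N x"
  shows "x \<in> nbrs N y"
proof -
  obtain l s where s: "s \<in> {1, N - 1}" and y: "y = x(l := (x l + s) mod N)"
    using assms(3) unfolding nbrs_def by auto
  have "x l < N"
    using assms(2) by (simp add: sites_def)
  have "s \<le> N" "N - s \<in> {1, N - 1}"
    using s assms(1) by auto
  have "(y l + (N - s)) mod N = (x l + s + (N - s)) mod N"
    using y by (simp add: mod_add_left_eq)
  also have "\<dots> = x l"
    using \<open>s \<le> N\<close> \<open>x l < N\<close> by simp
  finally have "x = y(l := (y l + (N - s)) mod N)"
    using y by auto
  then show ?thesis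
    unfolding nbrs_def using \<open>N - s \<in> {1, N - 1}\<close> by (auto intro: image_eqI[of _ _ "(l, N - s)"])
qed

lemma sum_diff_singleton_if:
  "finite A \<Longrightarrow> (\<Sum>y\<in>A - {b}. f y) = (\<Sum>y\<in>A. if y = b then 0 else f y)"
proof -
  assume "finite A"
  moreover have "A - {b} = {y\<in>A. y \<noteq> b}"
    by auto
  ultimately show ?thesis
    by (simp add: sum.inter_filter) (intro sum.cong; simp)
qed

lemma sum_nbrs_from:
  assumes "a \<in> sites N"
  shows "(\<Sum>x\<in>sites N. \<Sum>y\<in>nbrs N x. if x = a then F y else 0) = (\<Sum>y\<in>nbrs N a. F y)"
proof -
  have "(\<Sum>x\<in>sites N. \<Sum>y\<in>nbrs N x. if x = a then F y else 0)
      = (\<Sum>x\<in>sites N. if x = a then (\<Sum>y\<in>nbrs N a. F y) else 0)"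
    by (rule sum.cong) auto
  then show ?thesis
    using assms by (simp add: finite_sites)
qed

lemma sum_nbrs_to:
  assumes "2 \<le> N" "a \<in> sites N"
  shows "(\<Sum>x\<in>sites N. \<Sum>y\<in>nbrs N x. if y = a then F x else 0) = (\<Sum>x\<in>nbrs N a. F x)"
proof -
  have "(\<Sum>x\<in>sites N. \<Sum>y\<in>nbrs N x. if y = a then F x else 0)
      = (\<Sum>x\<in>sites N. if a \<in> nbrs N x then F x else 0)"
    by (rule sum.cong) (simp_all add: finite_nbrs)
  also have "\<dots> = (\<Sum>x\<in>{x\<in>sites N. a \<in> nbrs N x}. F x)"
    by (simp add: sum.inter_filter finite_sites)
  also have "{x\<in>sites N. a \<in> nbrs N x} = nbrs N a"
    using nbrs_sym[OF assms(1)] nbrs_subset_sites[of N] assms by force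
  finally show ?thesis .
qed

section \<open>Duality with two exclusion particles\<close>

definition distinct_pairs :: "nat \<Rightarrow> (('d::finite \<Rightarrow> nat) \<times> ('d \<Rightarrow> nat)) set" where
  "distinct_pairs N = {(a, b). a \<in> sites N \<and> b \<in> sites N \<and> a \<noteq> b}"

definition pair_occupied :: "'a \<times> 'a \<Rightarrow> ('a \<Rightarrow> bool) \<Rightarrow> real" where
  "pair_occupied p \<eta> = (if \<eta> (fst p) \<and> \<eta> (snd p) then 1 else 0)"

definition two_particle_gen :: "nat \<Rightarrow> ((('d::finite \<Rightarrow> nat) \<times> ('d \<Rightarrow> nat)) \<Rightarrow> real)
    \<Rightarrow> ('d \<Rightarrow> nat) \<times> ('d \<Rightarrow> nat) \<Rightarrow> real" where
  "two_particle_gen N g p =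
     real N ^ 2 * (\<Sum>y\<in>nbrs N (fst p) - {snd p}. g (y, snd p) - g p)
   + real N ^ 2 * (\<Sum>y\<in>nbrs N (snd p) - {fst p}. g (fst p, y) - g p)"

lemma fun_linear_gen: "fun_linear (gen N)"
proof -
  have add: "(if c then f1 + g1 - (f0 + g0) else 0)
      = (if c then f1 - f0 else 0) + (if c then g1 - g0 else 0)"
    and scale: "(if c then k * f1 - k * f0 else 0) = k * (if c then f1 - f0 else 0)"
    for c :: bool and f1 g1 f0 g0 k :: real
    by (simp_all add: algebra_simps)
  show ?thesis
    unfolding fun_linear_def gen_def
    by (simp add: add scale sum.distrib sum_distrib_left fun_eq_iff distrib_left mult.left_commute)
qed

lemma fun_linear_two_particle_gen: "fun_linear (two_particle_gen N)"
  unfolding fun_linear_def two_particle_gen_def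
  by (simp add: fun_eq_iff sum.distrib sum_subtractf sum_distrib_left algebra_simps)

lemma gen_commute:
  assumes "fun_linear T"
  shows "gen N (\<lambda>\<eta>. T (\<lambda>q. G q \<eta>) p) \<eta> = T (\<lambda>q. gen N (G q) \<eta>) p"
proof -
  have "T (\<lambda>q. real N ^ 2 * (if c then A q - B q else 0)) p
      = real N ^ 2 * (if c then T A p - T B p else 0)" for c A B
    by (cases c)
      (simp_all add: fun_linear_scale[OF assms] fun_linear_diff[OF assms] fun_linear_zero[OF assms])
  then show ?thesis
    unfolding gen_def by (simp add: fun_linear_sum[OF assms] finite_sites finite_nbrs)
qed

lemma two_particle_gen_cong:
  assumes "0 < N" "p \<in> distinct_pairs N" "\<And>q. q \<in> distinct_pairs N \<Longrightarrow> f q = g q"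
  shows "two_particle_gen N f p = two_particle_gen N g p"
proof -
  obtain a b where p: "p = (a, b)" and a: "a \<in> sites N" and b: "b \<in> sites N"
    using assms(2) by (auto simp: distinct_pairs_def)
  have "(\<Sum>y\<in>nbrs N a - {b}. f (y, b) - f (a, b))
      = (\<Sum>y\<in>nbrs N a - {b}. g (y, b) - g (a, b))"
    using nbrs_subset_sites[OF assms(1) a] assms(2,3) b p
    by (intro sum.cong) (auto simp: distinct_pairs_def)
  moreover have "(\<Sum>y\<in>nbrs N b - {a}. f (a, y) - f (a, b))
      = (\<Sum>y\<in>nbrs N b - {a}. g (a, y) - g (a, b))"
    using nbrs_subset_sites[OF assms(1) b] assms(2,3) a p
    by (intro sum.cong) (auto simp: distinct_pairs_def)
  ultimately show ?thesis
    unfolding two_particle_gen_def p by simp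
qed

lemma funpow_two_particle_gen_cong:
  assumes "0 < N" "p \<in> distinct_pairs N" "\<And>q. q \<in> distinct_pairs N \<Longrightarrow> f q = g q"
  shows "(two_particle_gen N ^^ k) f p = (two_particle_gen N ^^ k) g p"
  using assms(2)
proof (induction k arbitrary: p)
  case (Suc k)
  show ?case
    using two_particle_gen_cong[OF assms(1) Suc.prems Suc.IH] by simp
qed (use assms(3) in simp)

lemma gen_pair_occupied:
  assumes "2 \<le> N" and ab: "(a, b) \<in> distinct_pairs N"
  shows "gen N (pair_occupied (a, b)) \<eta> = two_particle_gen N (\<lambda>q. pair_occupied q \<eta>) (a, b)"
proof -
  have a: "a \<in> sites N" and b: "b \<in> sites N" and "a \<noteq> b"
    using ab by (auto simp: distinct_pairs_def)
  \<comment> \<open>A jump \<open>x \<rightarrow> y\<close> changes \<open>\<eta>(a) \<eta>(b)\<close> only if it leaves \<open>a\<close> or \<open>b\<close> (breaking the pair)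
     or enters \<open>a\<close> or \<open>b\<close> (completing it); jumps between \<open>a\<close> and \<open>b\<close> change nothing.\<close>
  define out_a where "out_a y = (if y \<noteq> b \<and> \<eta> a \<and> \<eta> b \<and> \<not> \<eta> y then - 1 else 0 :: real)" for y
  define out_b where "out_b y = (if y \<noteq> a \<and> \<eta> a \<and> \<eta> b \<and> \<not> \<eta> y then - 1 else 0 :: real)" for y
  define in_a where "in_a x = (if x \<noteq> b \<and> \<eta> x \<and> \<not> \<eta> a \<and> \<eta> b then 1 else 0 :: real)" for x
  define in_b where "in_b x = (if x \<noteq> a \<and> \<eta> x \<and> \<eta> a \<and> \<not> \<eta> b then 1 else 0 :: real)" for x
  let ?jump = "\<lambda>x y. if \<eta> x \<and> \<not> \<eta> y
    then pair_occupied (a, b) (\<eta>(x := False, y := True)) - pair_occupied (a, b) \<eta> else 0"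
  let ?split = "\<lambda>x y. (if x = a then out_a y else 0) + (if x = b then out_b y else 0)
    + (if y = a then in_a x else 0) + (if y = b then in_b x else 0)"
  have jump: "?jump x y = ?split x y" if "x \<noteq> y" for x y
    using that \<open>a \<noteq> b\<close> unfolding pair_occupied_def out_a_def out_b_def in_a_def in_b_def
    by (cases "x = a"; cases "y = b"; cases "x = b"; cases "y = a";
        cases "\<eta> x"; cases "\<eta> y"; cases "\<eta> a"; cases "\<eta> b") simp_all
  have "gen N (pair_occupied (a, b)) \<eta> = real N ^ 2 * (\<Sum>x\<in>sites N. \<Sum>y\<in>nbrs N x. ?jump x y)"
    unfolding gen_def by (simp add: sum_distrib_left)
  also have "(\<Sum>x\<in>sites N. \<Sum>y\<in>nbrs N x. ?jump x y) = (\<Sum>x\<in>sites N. \<Sum>y\<in>nbrs N x. ?split x y)"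
    using self_notin_nbrs[OF assms(1)] by (intro sum.cong refl jump) blast
  also have "\<dots> = (\<Sum>y\<in>nbrs N a. out_a y + in_a y) + (\<Sum>y\<in>nbrs N b. out_b y + in_b y)"
    unfolding sum.distrib sum_nbrs_from[OF a] sum_nbrs_from[OF b] sum_nbrs_to[OF assms(1) a]
      sum_nbrs_to[OF assms(1) b]
    by simp
  also have "real N ^ 2 * \<dots> = two_particle_gen N (\<lambda>q. pair_occupied q \<eta>) (a, b)"
  proof -
    have "out_a y + in_a y = (if y = b then 0 else pair_occupied (y, b) \<eta> - pair_occupied (a, b) \<eta>)"
      and "out_b y + in_b y = (if y = a then 0 else pair_occupied (a, y) \<eta> - pair_occupied (a, b) \<eta>)"
      for y
      by (auto simp: pair_occupied_def out_a_def out_b_def in_a_def in_b_def)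
    then show ?thesis
      unfolding two_particle_gen_def by (simp add: sum_diff_singleton_if finite_nbrs distrib_left)
  qed
  finally show ?thesis .
qed

lemma funpow_gen_pair_occupied:
  assumes "2 \<le> N" "p \<in> distinct_pairs N"
  shows "(gen N ^^ k) (pair_occupied p) \<eta> = (two_particle_gen N ^^ k) (\<lambda>q. pair_occupied q \<eta>) p"
  using assms(2)
proof (induction k arbitrary: p \<eta>)
  case (Suc k)
  have "0 < N"
    using assms(1) by simp
  have one_step: "gen N (pair_occupied q) \<eta> = two_particle_gen N (\<lambda>q. pair_occupied q \<eta>) q"
    if "q \<in> distinct_pairs N" for q
    using gen_pair_occupied[OF assms(1)] that by (cases q) simp
  have "(gen N ^^ k) (pair_occupied p)
      = (\<lambda>\<eta>'. (two_particle_gen N ^^ k) (\<lambda>q. pair_occupied q \<eta>') p)"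
    using Suc.IH[OF Suc.prems] by (rule ext)
  then have "(gen N ^^ Suc k) (pair_occupied p) \<eta>
      = gen N (\<lambda>\<eta>'. (two_particle_gen N ^^ k) (\<lambda>q. pair_occupied q \<eta>') p) \<eta>"
    by simp
  also have "\<dots> = (two_particle_gen N ^^ k) (\<lambda>q. gen N (pair_occupied q) \<eta>) p"
    by (rule gen_commute[OF fun_linear_funpow[OF fun_linear_two_particle_gen]])
  also have "\<dots> = (two_particle_gen N ^^ k) (two_particle_gen N (\<lambda>q. pair_occupied q \<eta>)) p"
    by (rule funpow_two_particle_gen_cong[OF \<open>0 < N\<close> Suc.prems one_step])
  finally show ?case
    by (simp add: funpow_Suc_right del: funpow.simps)
qed simp

lemma two_particle_total_rate_le:
  fixes a b :: "'d::finite \<Rightarrow> nat"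
  shows "real N ^ 2 * real (card (nbrs N a - {b})) + real N ^ 2 * real (card (nbrs N b - {a}))
    \<le> 4 * real CARD('d) * real N ^ 2"
proof -
  have "card (nbrs N a - {b}) \<le> 2 * CARD('d)" "card (nbrs N b - {a}) \<le> 2 * CARD('d)"
    using card_nbrs_le by (meson card_Diff1_le finite_nbrs le_trans)+
  then have "real (card (nbrs N a - {b}) + card (nbrs N b - {a})) \<le> real (4 * CARD('d))"
    by (intro of_nat_mono) linarith
  then have "real N ^ 2 * (real (card (nbrs N a - {b})) + real (card (nbrs N b - {a})))
      \<le> real N ^ 2 * (4 * real CARD('d))"
    by (intro mult_left_mono) simp_all
  then show ?thesis
    by (simp add: distrib_left mult.commute)
qed

lemma two_particle_gen_shift_bounds:
  fixes h :: "('d::finite \<Rightarrow> nat) \<times> ('d \<Rightarrow> nat) \<Rightarrow> real"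
  assumes "0 < N" and c: "4 * real CARD('d) * real N ^ 2 \<le> c"
    and h: "\<forall>q\<in>distinct_pairs N. 0 \<le> h q \<and> h q \<le> B"
  shows "\<forall>p\<in>distinct_pairs N. 0 \<le> two_particle_gen N h p + c * h p
           \<and> two_particle_gen N h p + c * h p \<le> c * B"
proof
  fix p :: "('d \<Rightarrow> nat) \<times> ('d \<Rightarrow> nat)"
  assume "p \<in> distinct_pairs N"
  then obtain a b where p: "p = (a, b)" and a: "a \<in> sites N" and b: "b \<in> sites N" and "a \<noteq> b"
    by (auto simp: distinct_pairs_def)
  define Na where "Na = nbrs N a - {b}"
  define Nb where "Nb = nbrs N b - {a}"
  have "(y, b) \<in> distinct_pairs N" if "y \<in> Na" for y
    using that nbrs_subset_sites[OF \<open>0 < N\<close> a] b by (auto simp: Na_def distinct_pairs_def)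
  then have sum_a: "0 \<le> (\<Sum>y\<in>Na. h (y, b))" "(\<Sum>y\<in>Na. h (y, b)) \<le> real (card Na) * B"
    using h by (auto intro: sum_nonneg sum_bounded_above)
  have "(a, y) \<in> distinct_pairs N" if "y \<in> Nb" for y
    using that nbrs_subset_sites[OF \<open>0 < N\<close> b] a by (auto simp: Nb_def distinct_pairs_def)
  then have sum_b: "0 \<le> (\<Sum>y\<in>Nb. h (a, y))" "(\<Sum>y\<in>Nb. h (a, y)) \<le> real (card Nb) * B"
    using h by (auto intro: sum_nonneg sum_bounded_above)
  have h_ab: "0 \<le> h (a, b)" "h (a, b) \<le> B"
    using h \<open>p \<in> distinct_pairs N\<close> p by auto
  have "real N ^ 2 * real (card Na) + real N ^ 2 * real (card Nb) \<le> c"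
    using two_particle_total_rate_le[of N a b] c unfolding Na_def Nb_def by linarith
  then obtain r where r: "0 \<le> r" "c = real N ^ 2 * real (card Na) + real N ^ 2 * real (card Nb) + r"
    by (intro that[of "c - (real N ^ 2 * real (card Na) + real N ^ 2 * real (card Nb))"]) simp_all
  have "two_particle_gen N h p + c * h p
      = real N ^ 2 * (\<Sum>y\<in>Na. h (y, b)) + real N ^ 2 * (\<Sum>y\<in>Nb. h (a, y)) + r * h (a, b)"
    unfolding two_particle_gen_def p Na_def Nb_def r(2) by (simp add: sum_subtractf algebra_simps)
  moreover have "real N ^ 2 * (\<Sum>y\<in>Na. h (y, b)) + real N ^ 2 * (\<Sum>y\<in>Nb. h (a, y)) + r * h (a, b)
      \<le> real N ^ 2 * (real (card Na) * B) + real N ^ 2 * (real (card Nb) * B) + r * B"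
    using sum_a sum_b h_ab r(1) by (intro add_mono mult_left_mono) auto
  ultimately show "0 \<le> two_particle_gen N h p + c * h p \<and> two_particle_gen N h p + c * h p \<le> c * B"
    using sum_a sum_b h_ab r by (simp add: algebra_simps)
qed

definition pair_semigroup :: "nat \<Rightarrow> real \<Rightarrow> ((('d::finite \<Rightarrow> nat) \<times> ('d \<Rightarrow> nat)) \<Rightarrow> real)
    \<Rightarrow> ('d \<Rightarrow> nat) \<times> ('d \<Rightarrow> nat) \<Rightarrow> real" where
  "pair_semigroup N t g p = (\<Sum>k. t^k / fact k * (two_particle_gen N ^^ k) g p)"

lemma pair_semigroup_sums_bounded:
  fixes g :: "('d::finite \<Rightarrow> nat) \<times> ('d \<Rightarrow> nat) \<Rightarrow> real"
  assumes "0 < N" "0 \<le> t" "p \<in> distinct_pairs N" "\<forall>q\<in>distinct_pairs N. 0 \<le> g q \<and> g q \<le> B"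
  shows "(\<lambda>k. t^k / fact k * (two_particle_gen N ^^ k) g p) sums pair_semigroup N t g p"
    and "0 \<le> pair_semigroup N t g p" and "pair_semigroup N t g p \<le> B"
proof -
  obtain s where s: "(\<lambda>k. t^k / fact k * (two_particle_gen N ^^ k) g p) sums s" "0 \<le> s" "s \<le> B"
    using exp_series_nonneg_bounded[OF fun_linear_two_particle_gen assms(2)
        two_particle_gen_shift_bounds[OF assms(1) order_refl] assms(3,4)] .
  moreover have "pair_semigroup N t g p = s"
    unfolding pair_semigroup_def using s(1) by (rule sums_unique[symmetric])
  ultimately show "(\<lambda>k. t^k / fact k * (two_particle_gen N ^^ k) g p) sums pair_semigroup N t g p"
    and "0 \<le> pair_semigroup N t g p" and "pair_semigroup N t g p \<le> B"
    by simp_all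
qed

lemma pair_semigroup_linear:
  fixes g :: "'i \<Rightarrow> ('d::finite \<Rightarrow> nat) \<times> ('d \<Rightarrow> nat) \<Rightarrow> real"
  assumes "0 < N" "0 \<le> t" "p \<in> distinct_pairs N" "finite I"
    and "\<forall>i\<in>I. \<forall>q\<in>distinct_pairs N. 0 \<le> g i q \<and> g i q \<le> B"
  shows "pair_semigroup N t (\<lambda>q. \<Sum>i\<in>I. w i * g i q) p = (\<Sum>i\<in>I. w i * pair_semigroup N t (g i) p)"
proof -
  have lin: "fun_linear (two_particle_gen N ^^ k)" for k
    by (rule fun_linear_funpow[OF fun_linear_two_particle_gen])
  have "(\<lambda>k. \<Sum>i\<in>I. w i * (t^k / fact k * (two_particle_gen N ^^ k) (g i) p))
      sums (\<Sum>i\<in>I. w i * pair_semigroup N t (g i) p)"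
    using pair_semigroup_sums_bounded(1)[OF assms(1-3)] assms(5) by (intro sums_sum sums_mult) blast
  moreover have "(\<Sum>i\<in>I. w i * (t^k / fact k * (two_particle_gen N ^^ k) (g i) p))
      = t^k / fact k * (two_particle_gen N ^^ k) (\<lambda>q. \<Sum>i\<in>I. w i * g i q) p" for k
    by (simp add: fun_linear_sum[OF lin assms(4)] fun_linear_scale[OF lin] sum_distrib_left mult_ac)
  ultimately show ?thesis
    unfolding pair_semigroup_def by (simp add: sums_iff)
qed

definition bond :: "nat \<Rightarrow> 'd \<Rightarrow> ('d \<Rightarrow> nat) \<Rightarrow> ('d \<Rightarrow> nat) \<times> ('d \<Rightarrow> nat)" where
  "bond N l x = (x, x(l := (x l + 1) mod N))"

definition bond_weight :: "nat \<Rightarrow> nat \<Rightarrow> ('d \<Rightarrow> real ^ 'd \<Rightarrow> real)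
    \<Rightarrow> 'd::finite \<Rightarrow> ('d \<Rightarrow> nat) \<Rightarrow> real" where
  "bond_weight n N \<phi> l x =
     real N ^ CARD('d) / real n ^ 2 * \<phi> l (cell_center N x + (1 / (2 * real N)) *\<^sub>R axis l 1)"

lemma pair_functional_eq:
  "pair_functional n N \<phi> \<eta>
    = (\<Sum>l\<in>UNIV. \<Sum>x\<in>sites N. bond_weight n N \<phi> l x * pair_occupied (bond N l x) \<eta>)"
  unfolding pair_functional_def bond_weight_def bond_def pair_occupied_def
  by (simp add: sum_distrib_left mult_ac)

lemma bond_in_distinct_pairs:
  assumes "2 \<le> N" "x \<in> sites N"
  shows "bond N l x \<in> distinct_pairs N"
proof -
  have "x(l := (x l + 1) mod N) \<in> nbrs N x"
    unfolding nbrs_def by (rule image_eqI[where x="(l, 1)"]) auto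
  moreover from this have "x(l := (x l + 1) mod N) \<noteq> x"
    using self_notin_nbrs[OF assms(1)] by metis
  ultimately show ?thesis
    using nbrs_subset_sites[of N x] assms by (auto simp: bond_def distinct_pairs_def)
qed

lemma semigroup_pair_functional:
  fixes \<phi> :: "'d::finite \<Rightarrow> real ^ 'd \<Rightarrow> real"
  assumes "2 \<le> N" "0 \<le> t"
  shows "semigroup N t (pair_functional n N \<phi>) \<eta> = (\<Sum>l\<in>UNIV. \<Sum>x\<in>sites N.
      bond_weight n N \<phi> l x * pair_semigroup N t (\<lambda>q. pair_occupied q \<eta>) (bond N l x))"
proof -
  let ?W = "bond_weight n N \<phi>" and ?K = "two_particle_gen N" and ?G = "\<lambda>q. pair_occupied q \<eta>"
  have lin: "fun_linear (gen N ^^ k)" for k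
    by (rule fun_linear_funpow[OF fun_linear_gen])
  have pairs: "bond N l x \<in> distinct_pairs N"
    if "x \<in> sites N" for x :: "'d \<Rightarrow> nat" and l :: 'd
    using bond_in_distinct_pairs[OF assms(1) that] .
  have "(gen N ^^ k) (pair_functional n N \<phi>) \<eta>
      = (\<Sum>l\<in>UNIV. \<Sum>x\<in>sites N. ?W l x * (gen N ^^ k) (pair_occupied (bond N l x)) \<eta>)" for k
    by (simp add: pair_functional_eq[abs_def] fun_linear_sum[OF lin] fun_linear_scale[OF lin]
        finite_sites)
  also have "\<dots> k = (\<Sum>l\<in>UNIV. \<Sum>x\<in>sites N. ?W l x * (?K ^^ k) ?G (bond N l x))" for k
    by (intro sum.cong refl) (simp add: funpow_gen_pair_occupied[OF assms(1) pairs])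
  finally have "t^k / fact k * (gen N ^^ k) (pair_functional n N \<phi>) \<eta>
      = (\<Sum>l\<in>UNIV. \<Sum>x\<in>sites N. ?W l x * (t^k / fact k * (?K ^^ k) ?G (bond N l x)))" for k
    by (simp add: sum_distrib_left mult_ac)
  moreover have "(\<lambda>k. \<Sum>l\<in>UNIV. \<Sum>x\<in>sites N. ?W l x * (t^k / fact k * (?K ^^ k) ?G (bond N l x)))
      sums (\<Sum>l\<in>UNIV. \<Sum>x\<in>sites N. ?W l x * pair_semigroup N t ?G (bond N l x))"
    using assms pairs
    by (intro sums_sum sums_mult pair_semigroup_sums_bounded(1)[where B=1])
      (auto simp: pair_occupied_def)
  ultimately show ?thesis
    unfolding semigroup_def by (simp add: sums_iff)
qed

definition initial_two_point :: "nat \<Rightarrow> nat \<Rightarrow> (real ^ 'd \<Rightarrow> real)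
    \<Rightarrow> ('d::finite \<Rightarrow> nat) \<times> ('d \<Rightarrow> nat) \<Rightarrow> real" where
  "initial_two_point n N \<rho>0 q = (\<Sum>\<eta>\<in>configs N. init_dist n N \<rho>0 \<eta> * pair_occupied q \<eta>)"

lemma expected_pairing_dual:
  fixes \<phi> :: "'d::finite \<Rightarrow> real ^ 'd \<Rightarrow> real"
  assumes "2 \<le> N" "0 \<le> t"
  shows "expected_pairing n N \<rho>0 \<phi> t = (\<Sum>l\<in>UNIV. \<Sum>x\<in>sites N.
      bond_weight n N \<phi> l x * pair_semigroup N t (initial_two_point n N \<rho>0) (bond N l x))"
proof -
  let ?W = "bond_weight n N \<phi>" and ?\<mu> = "init_dist n N \<rho>0"
    and ?S = "\<lambda>\<eta>. pair_semigroup N t (\<lambda>q. pair_occupied q \<eta>)"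
  have "finite (configs N :: (('d \<Rightarrow> nat) \<Rightarrow> bool) set)"
    unfolding configs_def by (simp add: finite_PiE finite_sites)
  then have average:
      "(\<Sum>\<eta>\<in>configs N. ?\<mu> \<eta> * ?S \<eta> p) = pair_semigroup N t (initial_two_point n N \<rho>0) p"
    if "p \<in> distinct_pairs N" for p
    unfolding initial_two_point_def[abs_def] using assms that
    by (intro pair_semigroup_linear[symmetric, where B=1]) (auto simp: pair_occupied_def)
  have "expected_pairing n N \<rho>0 \<phi> t
      = (\<Sum>\<eta>\<in>configs N. \<Sum>l\<in>UNIV. \<Sum>x\<in>sites N. ?W l x * (?\<mu> \<eta> * ?S \<eta> (bond N l x)))"
    unfolding expected_pairing_def semigroup_pair_functional[OF assms]
    by (simp add: sum_distrib_left mult.left_commute)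
  also have "\<dots> = (\<Sum>l\<in>UNIV. \<Sum>x\<in>sites N. \<Sum>\<eta>\<in>configs N. ?W l x * (?\<mu> \<eta> * ?S \<eta> (bond N l x)))"
    by (subst sum.swap) (simp only: sum.swap[of _ "configs N"])
  also have "\<dots> = (\<Sum>l\<in>UNIV. \<Sum>x\<in>sites N.
      ?W l x * pair_semigroup N t (initial_two_point n N \<rho>0) (bond N l x))"
    by (intro sum.cong refl)
      (simp add: average bond_in_distinct_pairs[OF assms(1)] flip: sum_distrib_left)
  finally show ?thesis .
qed

section \<open>Bounds on the initial data and the test functions\<close>

lemma periodic_shift_int:
  fixes f :: "real ^ 'd::finite \<Rightarrow> 'a"
  assumes per: "\<And>i y. f (y + axis i 1) = f y"
  shows "f (y + of_int m *\<^sub>R axis i 1) = f y"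
proof (induction m rule: int_induct[where k=0])
  case (step1 m)
  have "f (y + of_int (m + 1) *\<^sub>R axis i 1) = f ((y + of_int m *\<^sub>R axis i 1) + axis i 1)"
    by (simp add: algebra_simps)
  then show ?case
    using per step1.IH by simp
next
  case (step2 m)
  have "f (y + of_int (m - 1) *\<^sub>R axis i 1) = f ((y + of_int (m - 1) *\<^sub>R axis i 1) + axis i 1)"
    by (rule per[symmetric])
  also have "\<dots> = f (y + of_int m *\<^sub>R axis i 1)"
    by (simp add: algebra_simps)
  finally show ?case
    using step2.IH by simp
qed simp

lemma periodic_shift_int_vec:
  fixes f :: "real ^ 'd::finite \<Rightarrow> 'a"
  assumes per: "\<And>i y. f (y + axis i 1) = f y"
  shows "f (y + (\<chi> i. of_int (k i))) = f y"
proof -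
  have "f (y + (\<Sum>i\<in>S. of_int (k i) *\<^sub>R axis i 1)) = f y" if "finite S" for S
    using that
  proof (induction arbitrary: y)
    case (insert j S)
    have "f (y + (\<Sum>i\<in>insert j S. of_int (k i) *\<^sub>R axis i 1))
        = f ((y + (\<Sum>i\<in>S. of_int (k i) *\<^sub>R axis i 1)) + of_int (k j) *\<^sub>R axis j 1)"
      using insert.hyps by (simp add: algebra_simps)
    also have "\<dots> = f (y + (\<Sum>i\<in>S. of_int (k i) *\<^sub>R axis i 1))"
      by (rule periodic_shift_int[of f, OF per, of _ "k j" j])
    finally show ?case
      using insert.IH by simp
  qed simp
  moreover have "(\<chi> i. of_int (k i)) = (\<Sum>i\<in>UNIV. of_int (k i) *\<^sub>R axis i (1::real))"
    by (simp add: vec_eq_iff axis_def if_distrib cong: if_cong)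
  ultimately show ?thesis
    by simp
qed

lemma torus_continuous_bounded:
  assumes "torus_continuous f"
  shows "\<exists>M. \<forall>y. \<bar>f y\<bar> \<le> M"
proof -
  have per: "\<And>i y. f (y + axis i 1) = f y"
    using assms by (simp add: torus_continuous_def)
  have "compact (f ` cbox 0 1)"
    using assms unfolding torus_continuous_def
    by (intro compact_continuous_image) (auto intro: continuous_on_subset)
  then obtain M where "\<forall>w\<in>f ` cbox 0 1. norm w \<le> M"
    using compact_imp_bounded bounded_iff by blast
  then have M: "\<forall>z\<in>cbox 0 1. \<bar>f z\<bar> \<le> M"
    by simp
  have "\<bar>f y\<bar> \<le> M" for y
  proof -
    have "y + (\<chi> i. of_int (- \<lfloor>y $ i\<rfloor>)) \<in> cbox 0 1"
      unfolding mem_box_cart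
    proof
      fix i
      show "0 $ i \<le> (y + (\<chi> i. of_int (- \<lfloor>y $ i\<rfloor>))) $ i
          \<and> (y + (\<chi> i. of_int (- \<lfloor>y $ i\<rfloor>))) $ i \<le> 1 $ i"
        using frac_lt_1[of "y $ i"] frac_ge_0[of "y $ i"] unfolding frac_def by simp
    qed
    then have "\<bar>f (y + (\<chi> i. of_int (- \<lfloor>y $ i\<rfloor>)))\<bar> \<le> M"
      using M by blast
    moreover have "f (y + (\<chi> i. of_int (- \<lfloor>y $ i\<rfloor>))) = f y"
      by (rule periodic_shift_int_vec[of f, OF per])
    ultimately show ?thesis
      by simp
  qed
  then show ?thesis
    by blast
qed

lemma abs_le_sup_norm:
  assumes "torus_continuous f"
  shows "\<bar>f y\<bar> \<le> sup_norm f"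
proof -
  obtain M where "\<forall>y. \<bar>f y\<bar> \<le> M"
    using torus_continuous_bounded[OF assms] by blast
  then have "bdd_above (range (\<lambda>y. \<bar>f y\<bar>))"
    by (intro bdd_aboveI2) auto
  then show ?thesis
    unfolding sup_norm_def by (rule cSUP_upper[OF UNIV_I])
qed

lemma abs_le_sup_norm2:
  fixes \<phi> :: "'d::finite \<Rightarrow> real ^ 'd \<Rightarrow> real"
  assumes "\<forall>l. torus_continuous (\<phi> l)"
  shows "\<bar>\<phi> l y\<bar> \<le> sup_norm2 \<phi>"
proof -
  have "\<forall>l. \<exists>M. \<forall>y. \<bar>\<phi> l y\<bar> \<le> M"
    using torus_continuous_bounded assms by blast
  then obtain M where M: "\<And>l y. \<bar>\<phi> l y\<bar> \<le> M l"
    by metis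
  have "\<bar>\<phi> l y\<bar> \<le> (\<Sum>l\<in>UNIV. M l)" for l y
  proof -
    have "0 \<le> M l'" for l'
      using M[of l' 0] by linarith
    then show ?thesis
      using M[of l y] member_le_sum[of l UNIV M] by simp
  qed
  then have "bdd_above (range (\<lambda>(l, y). \<bar>\<phi> l y\<bar>))"
    by (intro bdd_aboveI2) auto
  then show ?thesis
    unfolding sup_norm2_def using cSUP_upper[OF UNIV_I, of "\<lambda>(l, y). \<bar>\<phi> l y\<bar>" "(l, y)"] by simp
qed

lemma content_cell: "measure lborel (cell N (x :: 'd::finite \<Rightarrow> nat)) = (1 / real N) ^ CARD('d)"
proof -
  define lo hi where "lo = cell_center N x - (\<chi> i. 1 / (2 * real N))"
    and "hi = cell_center N x + (\<chi> i. 1 / (2 * real N))"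
  have "lo \<in> cbox lo hi"
    by (simp add: mem_box_cart lo_def hi_def)
  then have "measure lborel (cbox lo hi) = (\<Prod>i\<in>UNIV. hi $ i - lo $ i)"
    by (intro content_cbox_cart) blast
  also have "\<dots> = (\<Prod>i\<in>(UNIV :: 'd set). 1 / real N)"
    by (simp add: lo_def hi_def)
  finally show ?thesis
    by (simp add: cell_def lo_def hi_def)
qed

lemma init_prob_bounds:
  fixes \<rho>0 :: "real ^ 'd::finite \<Rightarrow> real" and x :: "'d \<Rightarrow> nat"
  assumes "torus_continuous \<rho>0" and "\<forall>y. 0 \<le> \<rho>0 y"
  shows "0 \<le> init_prob n N \<rho>0 x" and "init_prob n N \<rho>0 x \<le> real n * sup_norm \<rho>0 / real N ^ CARD('d)"
proof -
  have int: "\<rho>0 integrable_on cell N x"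
    using assms(1) unfolding cell_def torus_continuous_def
    by (intro integrable_continuous) (auto intro: continuous_on_subset)
  then show "0 \<le> init_prob n N \<rho>0 x"
    using assms(2) unfolding init_prob_def by (simp add: integral_nonneg)
  have "integral (cell N x) \<rho>0 \<le> integral (cell N x) (\<lambda>_. sup_norm \<rho>0)"
    using int abs_le_sup_norm[OF assms(1)] by (intro integral_le) (auto simp: abs_le_iff cell_def)
  also have "\<dots> = sup_norm \<rho>0 / real N ^ CARD('d)"
    by (simp add: cell_def content_cell[unfolded cell_def] power_one_over)
  finally have "real n * integral (cell N x) \<rho>0 \<le> real n * (sup_norm \<rho>0 / real N ^ CARD('d))"
    by (rule mult_left_mono) simp
  then show "init_prob n N \<rho>0 x \<le> real n * sup_norm \<rho>0 / real N ^ CARD('d)"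
    unfolding init_prob_def by simp
qed

lemma sum_bernoulli_product_pair:
  fixes \<rho> :: "'a \<Rightarrow> real"
  assumes "finite S" "a \<in> S" "b \<in> S" "a \<noteq> b"
  shows "(\<Sum>\<eta>\<in>S \<rightarrow>\<^sub>E (UNIV :: bool set).
      (\<Prod>x\<in>S. if \<eta> x then \<rho> x else 1 - \<rho> x) * pair_occupied (a, b) \<eta>) = \<rho> a * \<rho> b"
proof -
  \<comment> \<open>The indicator removes the factors \<open>1 - \<rho> a\<close> and \<open>1 - \<rho> b\<close>; the product of sums over
     \<open>\<beta> \<in> {False, True}\<close> then factorises, each other site contributing \<open>\<rho> x + (1 - \<rho> x) = 1\<close>.\<close>
  define w where "w x \<beta> = (if \<beta> then \<rho> x else 1 - \<rho> x) * (if x \<in> {a, b} \<and> \<not> \<beta> then 0 else 1)"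
    for x and \<beta> :: bool
  have "(\<Prod>x\<in>S. if \<eta> x then \<rho> x else 1 - \<rho> x) * pair_occupied (a, b) \<eta> = (\<Prod>x\<in>S. w x (\<eta> x))" for \<eta>
  proof -
    have "(\<Prod>x\<in>S. if x \<in> {a, b} \<and> \<not> \<eta> x then 0 else 1 :: real) = (\<Prod>x\<in>{a, b}. if \<eta> x then 1 else 0)"
      using assms by (intro prod.mono_neutral_cong_right) auto
    then show ?thesis
      using assms(4) by (simp add: w_def prod.distrib pair_occupied_def)
  qed
  then have "(\<Sum>\<eta>\<in>S \<rightarrow>\<^sub>E UNIV. (\<Prod>x\<in>S. if \<eta> x then \<rho> x else 1 - \<rho> x) * pair_occupied (a, b) \<eta>)
      = (\<Prod>x\<in>S. \<Sum>\<beta>\<in>UNIV. w x \<beta>)"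
    using prod_sum_PiE[OF assms(1), of "\<lambda>_. UNIV" w] by simp
  also have "\<dots> = (\<Prod>x\<in>{a, b}. \<rho> x)"
    using assms by (intro prod.mono_neutral_cong_right) (auto simp: w_def UNIV_bool)
  finally show ?thesis
    using assms(4) by simp
qed

lemma initial_two_point_bounds:
  fixes \<rho>0 :: "real ^ 'd::finite \<Rightarrow> real"
  assumes "torus_continuous \<rho>0" "\<forall>y. 0 \<le> \<rho>0 y" "q \<in> distinct_pairs N"
  shows "0 \<le> initial_two_point n N \<rho>0 q"
    and "initial_two_point n N \<rho>0 q \<le> (real n * sup_norm \<rho>0 / real N ^ CARD('d))^2"
proof -
  obtain a b where q: "q = (a, b)" and "a \<in> sites N" "b \<in> sites N" "a \<noteq> b"
    using assms(3) by (auto simp: distinct_pairs_def)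
  then have "initial_two_point n N \<rho>0 q = init_prob n N \<rho>0 a * init_prob n N \<rho>0 b"
    unfolding initial_two_point_def init_dist_def configs_def
    by (simp add: sum_bernoulli_product_pair finite_sites)
  moreover have "init_prob n N \<rho>0 a * init_prob n N \<rho>0 b
      \<le> (real n * sup_norm \<rho>0 / real N ^ CARD('d)) * (real n * sup_norm \<rho>0 / real N ^ CARD('d))"
    using init_prob_bounds[OF assms(1,2)] by (intro mult_mono') auto
  ultimately show "0 \<le> initial_two_point n N \<rho>0 q"
    and "initial_two_point n N \<rho>0 q \<le> (real n * sup_norm \<rho>0 / real N ^ CARD('d))^2"
    using init_prob_bounds(1)[OF assms(1,2)] by (simp_all add: power2_eq_square)
qed

lemma abs_bond_weight_le:
  fixes \<phi> :: "'d::finite \<Rightarrow> real ^ 'd \<Rightarrow> real"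
  assumes "\<forall>l. torus_continuous (\<phi> l)"
  shows "\<bar>bond_weight n N \<phi> l x\<bar> \<le> real N ^ CARD('d) / real n ^ 2 * sup_norm2 \<phi>"
proof -
  have w: "0 \<le> real N ^ CARD('d) / real n ^ 2"
    by simp
  show ?thesis
    unfolding bond_weight_def abs_mult abs_of_nonneg[OF w]
    by (rule mult_left_mono[OF abs_le_sup_norm2[OF assms] w])
qed

lemma bond_contribution_le:
  fixes \<phi> :: "'d::finite \<Rightarrow> real ^ 'd \<Rightarrow> real"
  assumes "\<forall>l. torus_continuous (\<phi> l)" "0 < N" "0 \<le> t" "p \<in> distinct_pairs N"
    and "\<forall>q\<in>distinct_pairs N. 0 \<le> g q \<and> g q \<le> B"
  shows "bond_weight n N \<phi> l x * pair_semigroup N t g p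
    \<le> real N ^ CARD('d) / real n ^ 2 * sup_norm2 \<phi> * B"
proof -
  have S: "0 \<le> pair_semigroup N t g p" "pair_semigroup N t g p \<le> B"
    using pair_semigroup_sums_bounded(2,3)[OF assms(2-5)] .
  have "bond_weight n N \<phi> l x * pair_semigroup N t g p
      \<le> \<bar>bond_weight n N \<phi> l x\<bar> * pair_semigroup N t g p"
    using S(1) by (rule mult_right_mono[OF abs_ge_self])
  also have "\<dots> \<le> real N ^ CARD('d) / real n ^ 2 * sup_norm2 \<phi> * B"
    using abs_bond_weight_le[OF assms(1), of n N l x] S
    by (intro mult_mono) (auto intro: order_trans[OF abs_ge_zero])
  finally show ?thesis .
qed

theorem lemma4p4:
  fixes \<rho>0 :: "real ^ 'd::finite \<Rightarrow> real"
    and \<phi> :: "'d \<Rightarrow> real ^ 'd \<Rightarrow> real"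
    and n N :: nat and T t :: real
  assumes "T > 0"
    and "torus_continuous \<rho>0" and "\<forall>y. \<rho>0 y \<ge> 0"
    and "\<forall>l. torus_continuous (\<phi> l)"
    and "n \<ge> 1" and "N \<ge> 2"
    and "\<forall>x\<in>sites N. init_prob n N \<rho>0 x \<le> 1"
    and "0 \<le> t" and "t \<le> T"
  shows "expected_pairing n N \<rho>0 \<phi> t \<le> real CARD('d) * sup_norm2 \<phi> * (sup_norm \<rho>0)^2"
proof -
  \<comment> \<open>The bound holds for every \<open>t \<ge> 0\<close>.\<close>
  define m where "m = real n * sup_norm \<rho>0 / real N ^ CARD('d)"
  have "0 < N"
    using \<open>N \<ge> 2\<close> by simp
  have two_point:
      "\<forall>q\<in>distinct_pairs N. 0 \<le> initial_two_point n N \<rho>0 q \<and> initial_two_point n N \<rho>0 q \<le> m^2"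
    using initial_two_point_bounds[OF assms(2,3)] unfolding m_def by blast
  have "expected_pairing n N \<rho>0 \<phi> t = (\<Sum>l\<in>UNIV. \<Sum>x\<in>sites N.
      bond_weight n N \<phi> l x * pair_semigroup N t (initial_two_point n N \<rho>0) (bond N l x))"
    using expected_pairing_dual \<open>N \<ge> 2\<close> \<open>0 \<le> t\<close> by blast
  also have "\<dots> \<le> (\<Sum>l\<in>(UNIV :: 'd set). \<Sum>x\<in>(sites N :: ('d \<Rightarrow> nat) set).
      real N ^ CARD('d) / real n ^ 2 * sup_norm2 \<phi> * m^2)"
    using bond_contribution_le[OF assms(4) \<open>0 < N\<close> \<open>0 \<le> t\<close> _ two_point]
      bond_in_distinct_pairs[OF \<open>N \<ge> 2\<close>]
    by (intro sum_mono) blast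
  also have "\<dots> = real CARD('d) * sup_norm2 \<phi> * (sup_norm \<rho>0)^2"
    using \<open>n \<ge> 1\<close> \<open>0 < N\<close> by (simp add: card_sites m_def field_simps power2_eq_square)
  finally show ?thesis .
qed

end
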